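(* Let $L$ be the set of all nonempty finite subsets of $\omega$. For $n\in\mathbb{N}$ let $x_n^*\in[-1,1]^L$ be given by $x_n^*(A)=1$ if $n\in A$ and $x_n^*(A)=0$ otherwise, and define $\Phi: FBL(L) \to \mathbb{R}^{\mathbb{N}}$ by $\Phi(f)=(f(x_n^* ))_{n\in\mathbb{N}}$. Then: (1) $\Phi(\delta_A) = \sum_{i \in A}e_i$ for every $A \in L$, where $(e_i)$ are the unit vectors of $c_0$; (2) $\Phi(f)\in c_0$ for every $f\in FBL(L)$, and $\Phi: FBL(L)\to c_0$ is a Banach lattice homomorphism; (3) $\Phi: FBL(L)\to c_0$ is surjective.
   Context: Here $\omega$ denotes the set of natural numbers, indexed so that the coordinates of $c_0$ correspond to its elements. For a nonempty set $A$ and $x\in A$, $\delta_x:[-1,1]^A\to[-1,1]$ is $\delta_x(x^* )=x^*(x)$. For $f:[-1,1]^A\to\mathbb{R}$, $$\|f\| = \sup \Big\{\sum_{i = 1}^n | f(x_{i}^{\ast})| : n \in \mathbb{N},\ x_1^{\ast}, \ldots, x_n^{\ast} \in [-1,1]^A,\ \sup_{x \in A} \sum_{i=1}^n |x_i^{\ast}(x)| \leq 1 \Big\}.$$ $FBL(A)$ is the Banach lattice generated by the functions $\delta_x$ ($x\in A$) inside the Banach lattice of all functions $[-1,1]^A\to\mathbb{R}$ with finite norm (pointwise operations and order). *)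

theory Defs
  imports "HOL-Analysis.Analysis"
begin

text \<open>The cube [-1,1]^A, with points represented as functions 'a => real that
  vanish outside A (so that each point of [-1,1]^A has a unique representative).\<close>
definition cube :: "'a set \<Rightarrow> ('a \<Rightarrow> real) set" where
  "cube A = {x. (\<forall>a\<in>A. \<bar>x a\<bar> \<le> 1) \<and> (\<forall>a. a \<notin> A \<longrightarrow> x a = 0)}"

text \<open>The FBL norm (possibly infinite, hence valued in ereal).  Families
  x_1*,...,x_n* are represented by lists.\<close>
definition fbl_norm :: "'a set \<Rightarrow> (('a \<Rightarrow> real) \<Rightarrow> real) \<Rightarrow> ereal" where
  "fbl_norm A f = (SUP xs \<in> {xs :: ('a \<Rightarrow> real) list. xs \<noteq> [] \<and> set xs \<subseteq> cube A \<and>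
        (\<forall>a\<in>A. (\<Sum>x\<leftarrow>xs. \<bar>x a\<bar>) \<le> 1)}. ereal (\<Sum>x\<leftarrow>xs. \<bar>f x\<bar>))"

definition delta :: "'a \<Rightarrow> ('a \<Rightarrow> real) \<Rightarrow> real" where
  "delta a = (\<lambda>x. x a)"

text \<open>FBL(A): the closed vector sublattice (for the FBL norm) generated by the delta_a,
  inside the space of functions on the cube (pointwise operations).\<close>
inductive_set FBL :: "'a set \<Rightarrow> (('a \<Rightarrow> real) \<Rightarrow> real) set" for A :: "'a set" where
  gen: "a \<in> A \<Longrightarrow> delta a \<in> FBL A"
| zero: "(\<lambda>x. 0) \<in> FBL A"
| add: "f \<in> FBL A \<Longrightarrow> g \<in> FBL A \<Longrightarrow> (\<lambda>x. f x + g x) \<in> FBL A"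
| smult: "f \<in> FBL A \<Longrightarrow> (\<lambda>x. c * f x) \<in> FBL A"
| sup: "f \<in> FBL A \<Longrightarrow> g \<in> FBL A \<Longrightarrow> (\<lambda>x. max (f x) (g x)) \<in> FBL A"
| lim: "(\<And>n. g n \<in> FBL A) \<Longrightarrow> ((\<lambda>n. fbl_norm A (\<lambda>x. g n x - f x)) \<longlongrightarrow> 0) sequentially
        \<Longrightarrow> f \<in> FBL A"

definition c0 :: "(nat \<Rightarrow> real) set" where
  "c0 = {s. s \<longlonglongrightarrow> 0}"

definition unitvec :: "nat \<Rightarrow> nat \<Rightarrow> real" where
  "unitvec i = (\<lambda>n. if n = i then 1 else 0)"

definition finNE :: "nat set set" where
  "finNE = {S. finite S \<and> S \<noteq> {}}"

definition xstar :: "nat \<Rightarrow> nat set \<Rightarrow> real" where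
  "xstar n = (\<lambda>S. if S \<in> finNE \<and> n \<in> S then 1 else 0)"

definition Phi :: "((nat set \<Rightarrow> real) \<Rightarrow> real) \<Rightarrow> nat \<Rightarrow> real" where
  "Phi f = (\<lambda>n. f (xstar n))"

definition fbl_c0_lattice_hom :: "'a set \<Rightarrow> ((('a \<Rightarrow> real) \<Rightarrow> real) \<Rightarrow> nat \<Rightarrow> real) \<Rightarrow> bool" where
  "fbl_c0_lattice_hom A T \<longleftrightarrow>
     (\<forall>f\<in>FBL A. T f \<in> c0) \<and>
     (\<forall>f\<in>FBL A. \<forall>g\<in>FBL A. T (\<lambda>x. f x + g x) = (\<lambda>n. T f n + T g n)) \<and>
     (\<forall>f\<in>FBL A. \<forall>c. T (\<lambda>x. c * f x) = (\<lambda>n. c * T f n)) \<and>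
     (\<forall>f\<in>FBL A. \<forall>g\<in>FBL A. T (\<lambda>x. max (f x) (g x)) = (\<lambda>n. max (T f n) (T g n))) \<and>
     (\<exists>C. \<forall>f\<in>FBL A. ereal (SUP n. \<bar>T f n\<bar>) \<le> ereal C * fbl_norm A f)"

end

theory Submission
  imports Defs
begin

text \<open>Each point x_n* is by itself an admissible family, so evaluation at it is bounded
  by the FBL norm: hence Phi is a contractive lattice homomorphism, and FBL norm limits become
  uniform limits of sequences, under which c_0 is closed. The generators are mapped to finitely
  supported sequences, so Phi lands in c_0. For surjectivity, a sequence in c_0 is a sum of
  finitely supported blocks r_k with sup norm at most B 2^-k. A finitely supported r bounded by c
  is the image of the sum of the r_j delta_{j} clamped between -c delta_F and c delta_F, for a set
  F containing the support; this preimage has FBL norm at most c, so the preimages of the blocks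
  form an absolutely convergent series in FBL.\<close>

lemma sums_sum_list:
  fixes F :: "'a \<Rightarrow> nat \<Rightarrow> 'b::{t2_space,topological_comm_monoid_add}"
  shows "(\<And>x. x \<in> set xs \<Longrightarrow> summable (F x)) \<Longrightarrow> (\<lambda>k. \<Sum>x\<leftarrow>xs. F x k) sums (\<Sum>x\<leftarrow>xs. \<Sum>k. F x k)"
  by (induction xs) (auto intro!: sums_add)

lemma tendsto_zero_if_uniform_approx:
  fixes f :: "nat \<Rightarrow> real"
  assumes g: "\<And>n. g n \<longlonglongrightarrow> 0"
    and approx: "\<And>e. e > 0 \<Longrightarrow> \<exists>n. \<forall>m. \<bar>g n m - f m\<bar> < e"
  shows "f \<longlonglongrightarrow> 0"
proof (rule LIMSEQ_I)
  fix e :: real assume "e > 0"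
  then obtain n where n: "\<And>m. \<bar>g n m - f m\<bar> < e / 2"
    using approx[of "e / 2"] by auto
  obtain N where N: "\<And>m. m \<ge> N \<Longrightarrow> \<bar>g n m\<bar> < e / 2"
    using LIMSEQ_D[OF g, of "e / 2"] \<open>e > 0\<close> by auto
  have "\<bar>f m\<bar> < e" if "m \<ge> N" for m
    using n[of m] N[OF that] by linarith
  then show "\<exists>N. \<forall>m\<ge>N. norm (f m - 0) < e" by auto
qed

lemma c0_geometric_thresholds:
  fixes s :: "nat \<Rightarrow> real"
  assumes "s \<longlonglongrightarrow> 0" "B > 0" "\<And>m. \<bar>s m\<bar> \<le> B"
  obtains M :: "nat \<Rightarrow> nat" where "M 0 = 0" "mono M" "\<And>k. k \<le> M k"
    "\<And>k m. M k \<le> m \<Longrightarrow> \<bar>s m\<bar> \<le> B * (1/2)^k"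
proof -
  have "\<exists>N. \<forall>m\<ge>N. \<bar>s m\<bar> \<le> B * (1/2)^k" for k
    using LIMSEQ_D[OF assms(1), of "B * (1/2)^k"] \<open>B > 0\<close> by (auto intro: less_imp_le)
  then obtain N where N: "\<And>k m. m \<ge> N k \<Longrightarrow> \<bar>s m\<bar> \<le> B * (1/2)^k"
    by metis
  define M where "M k = (\<Sum>j\<in>{1..k}. N j) + k" for k
  show thesis
  proof
    show "M 0 = 0" "mono M" "\<And>k. k \<le> M k"
      by (simp_all add: M_def mono_iff_le_Suc)
    show "\<bar>s m\<bar> \<le> B * (1/2)^k" if "M k \<le> m" for k m
    proof (cases "k = 0")
      case False
      then have "N k \<le> M k" by (simp add: M_def member_le_sum trans_le_add1)
      then show ?thesis using that by (intro N) simp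
    qed (use assms(3) in simp)
  qed
qed

lemma c0_geometric_decomposition:
  assumes "s \<in> c0"
  obtains B and r :: "nat \<Rightarrow> nat \<Rightarrow> real" where
    "\<And>k. finite {m. r k m \<noteq> 0}" "\<And>k m. \<bar>r k m\<bar> \<le> B * (1/2)^k" "\<And>m. (\<lambda>k. r k m) sums s m"
proof -
  have s: "s \<longlonglongrightarrow> 0" using assms by (simp add: c0_def)
  obtain B where "B > 0" "\<And>m. \<bar>s m\<bar> \<le> B"
    using convergent_imp_Bseq[OF convergentI[OF s]] by (auto elim!: BseqE)
  then obtain M where M: "M 0 = 0" "mono M" "\<And>k. k \<le> M k"
    and tail: "\<And>k m. M k \<le> m \<Longrightarrow> \<bar>s m\<bar> \<le> B * (1/2)^k"
    using c0_geometric_thresholds[OF s] by blast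
  define T where "T K m = (if m < M K then s m else 0)" for K m
  define r where "r k m = T (Suc k) m - T k m" for k m
  show thesis
  proof
    fix k
    have "M k \<le> M (Suc k)" using \<open>mono M\<close> by (simp add: monoD)
    then have "r k m = 0" if "m \<ge> M (Suc k)" for m
      using that by (simp add: r_def T_def)
    then have "{m. r k m \<noteq> 0} \<subseteq> {..<M (Suc k)}"
      by (auto simp: not_less[symmetric])
    then show "finite {m. r k m \<noteq> 0}"
      by (rule finite_subset) simp
    show "\<bar>r k m\<bar> \<le> B * (1/2)^k" for m
      using tail[of k m] \<open>B > 0\<close> \<open>M k \<le> M (Suc k)\<close> by (simp add: r_def T_def)
  next
    show "(\<lambda>k. r k m) sums s m" for m
    proof -
      have "(\<Sum>k<K. r k m) = T K m" for K
        using sum_lessThan_telescope[of "\<lambda>k. T k m" K] by (simp add: r_def T_def M)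
      moreover have "T K m = s m" if "K > m" for K
        using M(3)[of K] that by (simp add: T_def)
      ultimately have "\<forall>\<^sub>F K in sequentially. (\<Sum>k<K. r k m) = s m"
        unfolding eventually_sequentially by (metis Suc_le_eq)
      then show ?thesis
        unfolding sums_def by (rule tendsto_eventually)
    qed
  qed
qed

definition fbl_admissible :: "'a set \<Rightarrow> ('a \<Rightarrow> real) list \<Rightarrow> bool" where
  "fbl_admissible A xs \<longleftrightarrow>
     xs \<noteq> [] \<and> set xs \<subseteq> cube A \<and> (\<forall>a\<in>A. (\<Sum>x\<leftarrow>xs. \<bar>x a\<bar>) \<le> 1)"

lemma fbl_norm_eq_SUP:
  "fbl_norm A f = (SUP xs \<in> Collect (fbl_admissible A). ereal (\<Sum>x\<leftarrow>xs. \<bar>f x\<bar>))"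
  unfolding fbl_norm_def fbl_admissible_def by simp

lemma sum_list_abs_le_fbl_norm:
  "fbl_admissible A xs \<Longrightarrow> ereal (\<Sum>x\<leftarrow>xs. \<bar>f x\<bar>) \<le> fbl_norm A f"
  unfolding fbl_norm_eq_SUP by (rule SUP_upper) simp

lemma fbl_norm_le:
  "(\<And>xs. fbl_admissible A xs \<Longrightarrow> (\<Sum>x\<leftarrow>xs. \<bar>f x\<bar>) \<le> c) \<Longrightarrow> fbl_norm A f \<le> ereal c"
  unfolding fbl_norm_eq_SUP by (rule SUP_least) simp

lemma fbl_admissible_singleton: "x \<in> cube A \<Longrightarrow> fbl_admissible A [x]"
  by (auto simp: fbl_admissible_def cube_def)

lemma abs_le_fbl_norm: "x \<in> cube A \<Longrightarrow> ereal \<bar>f x\<bar> \<le> fbl_norm A f"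
  using sum_list_abs_le_fbl_norm[OF fbl_admissible_singleton] by fastforce

lemma zero_in_cube: "(\<lambda>_. 0) \<in> cube A"
  by (simp add: cube_def)

lemma fbl_norm_nonneg: "0 \<le> fbl_norm A f"
  using abs_le_fbl_norm[OF zero_in_cube, of f] order_trans[of 0 "ereal \<bar>f (\<lambda>_. 0)\<bar>"] by simp

lemma SUP_abs_eval_le_fbl_norm:
  assumes "\<And>n. p n \<in> cube A"
  shows "ereal (SUP n. \<bar>f (p n)\<bar>) \<le> fbl_norm A f"
proof (cases "fbl_norm A f")
  case (real c)
  with abs_le_fbl_norm[OF assms] have "\<bar>f (p n)\<bar> \<le> c" for n
    by (metis ereal_less_eq(3))
  then have "(SUP n. \<bar>f (p n)\<bar>) \<le> c"
    by (intro cSUP_least) auto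
  then show ?thesis using real by simp
qed (use fbl_norm_nonneg[of A f] in auto)

lemma FBL_min:
  assumes "f \<in> FBL A" "g \<in> FBL A"
  shows "(\<lambda>x. min (f x) (g x)) \<in> FBL A"
proof -
  have "(\<lambda>x. -1 * max (-1 * f x) (-1 * g x)) \<in> FBL A"
    by (intro FBL.smult FBL.sup assms)
  moreover have "(\<lambda>x. -1 * max (-1 * f x) (-1 * g x)) = (\<lambda>x. min (f x) (g x))"
    by (auto simp: max_def min_def)
  ultimately show ?thesis by simp
qed

lemma FBL_sum:
  "finite I \<Longrightarrow> (\<And>i. i \<in> I \<Longrightarrow> h i \<in> FBL A) \<Longrightarrow> (\<lambda>x. \<Sum>i\<in>I. h i x) \<in> FBL A"
  by (induction I rule: finite_induct) (auto intro: FBL.zero FBL.add)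

lemma fbl_norm_suminf_remainder_le:
  assumes norm_G: "\<And>k. fbl_norm A (G k) \<le> ereal (b k)"
    and b: "summable b"
  shows "fbl_norm A (\<lambda>x. (\<Sum>k<K. G k x) - (\<Sum>k. G k x)) \<le> ereal (\<Sum>k. b (k + K))"
proof (rule fbl_norm_le)
  have abs_G: "\<bar>G k x\<bar> \<le> b k" if "x \<in> cube A" for k x
    using order_trans[OF abs_le_fbl_norm[OF that] norm_G] by simp
  have summable_tail: "summable (\<lambda>k. \<bar>G (k + K) x\<bar>)" if "x \<in> cube A" for K x
    using summable_rabs_comparison_test[OF _ b, of "\<lambda>k. G k x"] abs_G[OF that]
    by (intro summable_ignore_initial_segment) blast
  have remainder: "\<bar>(\<Sum>k<K. G k x) - (\<Sum>k. G k x)\<bar> \<le> (\<Sum>k. \<bar>G (k + K) x\<bar>)"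
    if "x \<in> cube A" for x
  proof -
    have "summable (\<lambda>k. G k x)"
      using summable_rabs_cancel summable_tail[OF that, of 0] by simp
    then have "(\<Sum>k<K. G k x) - (\<Sum>k. G k x) = - (\<Sum>k. G (k + K) x)"
      by (simp add: suminf_split_initial_segment[of _ K])
    then show ?thesis
      using summable_rabs[OF summable_tail[OF that]] by simp
  qed
  fix xs assume xs: "fbl_admissible A xs"
  then have cube: "x \<in> cube A" if "x \<in> set xs" for x
    using that by (auto simp: fbl_admissible_def)
  have sums: "(\<lambda>k. \<Sum>x\<leftarrow>xs. \<bar>G (k + K) x\<bar>) sums (\<Sum>x\<leftarrow>xs. \<Sum>k. \<bar>G (k + K) x\<bar>)"
    by (intro sums_sum_list summable_tail cube)
  have "(\<Sum>x\<leftarrow>xs. \<bar>(\<Sum>k<K. G k x) - (\<Sum>k. G k x)\<bar>) \<le> (\<Sum>x\<leftarrow>xs. \<Sum>k. \<bar>G (k + K) x\<bar>)"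
    by (intro sum_list_mono remainder cube)
  also have "\<dots> = (\<Sum>k. \<Sum>x\<leftarrow>xs. \<bar>G (k + K) x\<bar>)"
    using sums by (rule sums_unique)
  also have "\<dots> \<le> (\<Sum>k. b (k + K))"
  proof (rule suminf_le)
    show "(\<Sum>x\<leftarrow>xs. \<bar>G (k + K) x\<bar>) \<le> b (k + K)" for k
      using order_trans[OF sum_list_abs_le_fbl_norm[OF xs] norm_G] by simp
  qed (use sums b summable_ignore_initial_segment in \<open>auto simp: sums_iff\<close>)
  finally show "(\<Sum>x\<leftarrow>xs. \<bar>(\<Sum>k<K. G k x) - (\<Sum>k. G k x)\<bar>) \<le> (\<Sum>k. b (k + K))" .
qed

lemma FBL_suminf:
  assumes "\<And>k. G k \<in> FBL A"
    and "\<And>k. fbl_norm A (G k) \<le> ereal (b k)"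
    and b: "summable b"
  shows "(\<lambda>x. \<Sum>k. G k x) \<in> FBL A"
proof (rule FBL.lim[where g = "\<lambda>K x. \<Sum>k<K. G k x"])
  show "(\<lambda>x. \<Sum>k<K. G k x) \<in> FBL A" for K
    by (rule FBL_sum) (simp_all add: assms(1))
  have tail_0: "(\<lambda>K. ereal (\<Sum>k. b (k + K))) \<longlonglongrightarrow> 0"
    using suminf_exist_split2[OF b] by (simp add: zero_ereal_def tendsto_ereal)
  show "(\<lambda>K. fbl_norm A (\<lambda>x. (\<Sum>k<K. G k x) - (\<Sum>k. G k x))) \<longlonglongrightarrow> 0"
    by (rule tendsto_sandwich[OF _ _ tendsto_const tail_0])
      (simp_all add: fbl_norm_nonneg fbl_norm_suminf_remainder_le[OF assms(2) b])
qed

lemma FBL_eval_tendsto_zero: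
  assumes p: "\<And>n. p n \<in> cube A"
    and p_0: "\<And>a. a \<in> A \<Longrightarrow> (\<lambda>n. p n a) \<longlonglongrightarrow> 0"
    and "f \<in> FBL A"
  shows "(\<lambda>n. f (p n)) \<longlonglongrightarrow> 0"
  using \<open>f \<in> FBL A\<close>
proof (induction rule: FBL.induct)
  case (gen a)
  then show ?case by (simp add: delta_def p_0)
next
  case (lim g f)
  show ?case
  proof (rule tendsto_zero_if_uniform_approx[OF lim.IH])
    fix e :: real assume "e > 0"
    then obtain n where close: "fbl_norm A (\<lambda>x. g n x - f x) < ereal e"
      using order_tendstoD(2)[OF lim.hyps(2), of "ereal e"] by (auto simp: eventually_sequentially)
    have "\<bar>g n (p m) - f (p m)\<bar> < e" for m
      using order.strict_trans1[OF abs_le_fbl_norm[OF p] close] by simp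
    then show "\<exists>n. \<forall>m. \<bar>g n (p m) - f (p m)\<bar> < e" by blast
  qed
qed (auto intro: tendsto_add_zero tendsto_mult_right_zero tendsto_max[of _ 0 _ _ 0, simplified])

lemma xstar_in_cube: "xstar n \<in> cube finNE"
  by (auto simp: xstar_def cube_def)

lemma xstar_eq: "S \<in> finNE \<Longrightarrow> xstar n S = (if n \<in> S then 1 else 0)"
  by (simp add: xstar_def)

lemma xstar_tendsto_zero:
  assumes "S \<in> finNE"
  shows "(\<lambda>n. xstar n S) \<longlonglongrightarrow> 0"
proof (rule tendsto_eventually)
  obtain N where "S \<subseteq> {..<N}"
    using assms finite_nat_bounded by (auto simp: finNE_def)
  then have "xstar n S = 0" if "n \<ge> N" for n
    using assms that by (auto simp: xstar_eq)
  then show "\<forall>\<^sub>F n in sequentially. xstar n S = 0"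
    by (auto simp: eventually_sequentially)
qed

lemma Phi_delta: "S \<in> finNE \<Longrightarrow> Phi (delta S) = (\<lambda>n. \<Sum>i\<in>S. unitvec i n)"
  by (auto simp: Phi_def delta_def xstar_eq unitvec_def finNE_def)

lemma Phi_in_c0: "f \<in> FBL finNE \<Longrightarrow> Phi f \<in> c0"
  unfolding Phi_def c0_def
  by (blast intro: FBL_eval_tendsto_zero xstar_in_cube xstar_tendsto_zero)

lemma fbl_c0_lattice_hom_Phi: "fbl_c0_lattice_hom finNE Phi"
  unfolding fbl_c0_lattice_hom_def
proof (intro conjI)
  show "\<exists>C. \<forall>f\<in>FBL finNE. ereal (SUP n. \<bar>Phi f n\<bar>) \<le> ereal C * fbl_norm finNE f"
    using SUP_abs_eval_le_fbl_norm[of xstar, OF xstar_in_cube] by (intro exI[of _ 1]) (simp add: Phi_def)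
qed (use Phi_in_c0 in \<open>auto simp: Phi_def\<close>)

lemma Phi_preimage_finite_support:
  assumes "finite {m. r m \<noteq> 0}" "\<And>m. \<bar>r m\<bar> \<le> c"
  obtains G where "G \<in> FBL finNE" "Phi G = r" "fbl_norm finNE G \<le> ereal c"
proof
  define F where "F = insert 0 {m. r m \<noteq> 0}"
  have F: "F \<in> finNE" using assms(1) by (simp add: F_def finNE_def)
  define h where "h x = (\<Sum>j\<in>{m. r m \<noteq> 0}. r j * delta {j} x)" for x
  have "h \<in> FBL finNE"
    unfolding h_def using assms(1) by (intro FBL_sum FBL.smult FBL.gen) (auto simp: finNE_def)
  have "r j * delta {j} (xstar n) = (if n = j then r n else 0)" for j n
    by (simp add: delta_def xstar_eq finNE_def)
  then have Phi_h: "Phi h = r"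
    using assms(1) by (auto simp: h_def Phi_def sum.delta)
  txt \<open>Clamping h between the multiples of delta F keeps its values at the points x_m*, where
    delta F is 1 on the support of r, but bounds |G x| by c |x F|, whose sum over an admissible
    family is at most c. The point 0 is added to F only to make it nonempty.\<close>
  define G where "G x = max (- c * delta F x) (min (c * delta F x) (h x))" for x
  show "G \<in> FBL finNE"
    unfolding G_def using F \<open>h \<in> FBL finNE\<close> by (intro FBL.sup FBL_min FBL.smult FBL.gen)
  show "Phi G = r"
  proof
    fix m
    have "h (xstar m) = r m" "r m \<noteq> 0 \<longrightarrow> m \<in> F"
      using Phi_h by (auto simp: Phi_def F_def)
    then show "Phi G m = r m"
      using assms(2)[of m] by (auto simp: Phi_def G_def delta_def xstar_eq[OF F] abs_le_iff)
  qed
  show "fbl_norm finNE G \<le> ereal c"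
  proof (rule fbl_norm_le)
    fix xs assume xs: "fbl_admissible finNE xs"
    have "\<bar>G x\<bar> \<le> \<bar>c * x F\<bar>" for x
      by (simp add: G_def delta_def abs_le_iff max_def min_def, linarith)
    then have "\<bar>G x\<bar> \<le> c * \<bar>x F\<bar>" for x
      using assms(2)[of 0] by (simp add: abs_mult)
    then have "(\<Sum>x\<leftarrow>xs. \<bar>G x\<bar>) \<le> (\<Sum>x\<leftarrow>xs. c * \<bar>x F\<bar>)"
      by (rule sum_list_mono)
    also have "\<dots> = c * (\<Sum>x\<leftarrow>xs. \<bar>x F\<bar>)"
      by (simp add: sum_list_const_mult)
    also have "\<dots> \<le> c"
      using xs F assms(2)[of 0] by (auto simp: fbl_admissible_def intro: mult_left_le)
    finally show "(\<Sum>x\<leftarrow>xs. \<bar>G x\<bar>) \<le> c" .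
  qed
qed

lemma c0_subset_Phi_image: "c0 \<subseteq> Phi ` FBL finNE"
proof
  fix s assume "s \<in> c0"
  then obtain B r where r_finite: "\<And>k. finite {m. r k m \<noteq> 0}"
    and r_bound: "\<And>k m. \<bar>r k m\<bar> \<le> B * (1/2)^k" and r_sums: "\<And>m. (\<lambda>k. r k m) sums s m"
    by (metis c0_geometric_decomposition)
  have "\<forall>k. \<exists>G. G \<in> FBL finNE \<and> Phi G = r k \<and> fbl_norm finNE G \<le> ereal (B * (1/2)^k)"
    using Phi_preimage_finite_support[OF r_finite r_bound] by metis
  then obtain G where G: "\<And>k. G k \<in> FBL finNE" "\<And>k. Phi (G k) = r k"
    and norm_G: "\<And>k. fbl_norm finNE (G k) \<le> ereal (B * (1/2)^k)"
    by metis
  have "(\<lambda>x. \<Sum>k. G k x) \<in> FBL finNE"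
    using G(1) norm_G by (rule FBL_suminf) simp
  moreover have "Phi (\<lambda>x. \<Sum>k. G k x) = s"
    using G(2) r_sums by (auto simp: Phi_def fun_eq_iff sums_iff)
  ultimately show "s \<in> Phi ` FBL finNE" by force
qed

theorem mainTheorem4:
  shows "(\<forall>S\<in>finNE. Phi (delta S) = (\<lambda>n. \<Sum>i\<in>S. unitvec i n))
       \<and> (\<forall>f\<in>FBL finNE. Phi f \<in> c0)
       \<and> fbl_c0_lattice_hom finNE Phi
       \<and> Phi ` FBL finNE = c0"
  using Phi_delta Phi_in_c0 fbl_c0_lattice_hom_Phi c0_subset_Phi_image by blast

end
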